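(* Let $N_1,N_2\ge1$, let $C_k=\{(\xi_j)_{1\le j\le N_k}\in[0,1]^{N_k}:\sum_j\xi_j=1\}$ for $k=1,2$, and let $L$ be a nonzero real $N_1\times N_2$ matrix such that there exist $z_1\in C_1$, $z_2\in C_2$ with $-Lz_2\in N_{C_1}z_1$ and $L^\top z_1\in N_{C_2}z_2$. Let $\varepsilon\in]0,1/(\|L\|+1)[$ and let $(\gamma_n)_{n\in\mathbb N}$ be a sequence in $[\varepsilon,(1-\varepsilon)/\|L\|]$. Let $x_{1,0}\in\mathbb R^{N_1}$, $x_{2,0}\in\mathbb R^{N_2}$, and for every $n$ set $y_{1,n}=x_{1,n}-\gamma_nLx_{2,n}$, $y_{2,n}=x_{2,n}+\gamma_nL^\top x_{1,n}$, $p_{1,n}=P_{C_1}y_{1,n}$, $p_{2,n}=P_{C_2}y_{2,n}$, $q_{1,n}=p_{1,n}-\gamma_nLp_{2,n}$, $q_{2,n}=p_{2,n}+\gamma_nL^\top p_{1,n}$, $x_{1,n+1}=x_{1,n}-y_{1,n}+q_{1,n}$, $x_{2,n+1}=x_{2,n}-y_{2,n}+q_{2,n}$. Then $x_{1,n}\to\overline x_1$ and $x_{2,n}\to\overline x_2$, where $\overline x_1\in\operatorname{Argmin}_{x\in C_1}x^\top L\overline x_2$ and $\overline x_2\in\operatorname{Argmax}_{x\in C_2}\overline x_1^\top Lx$.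
   Context: $\|L\|$ is the operator norm of $L$ (Euclidean norms). For a nonempty closed convex set $C$, $P_C$ is the Euclidean projection onto $C$ and $N_Cx=\{u:\langle y-x,u\rangle\le0\ \forall y\in C\}$ for $x\in C$ (empty otherwise) is the normal cone. *)

theory Defs
  imports "HOL-Analysis.Analysis"
begin

definition prob_simplex :: "(real ^ 'n::finite) set" where
  "prob_simplex = {v. (\<forall>j. 0 \<le> v $ j \<and> v $ j \<le> 1) \<and> (\<Sum>j\<in>UNIV. v $ j) = 1}"

definition normal_cone :: "'a::real_inner set \<Rightarrow> 'a \<Rightarrow> 'a set" where
  "normal_cone C x = (if x \<in> C then {u. \<forall>y\<in>C. inner (y - x) u \<le> 0} else {})"


definition argmin_on :: "'a set \<Rightarrow> ('a \<Rightarrow> real) \<Rightarrow> 'a set" where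
  "argmin_on C f = {x \<in> C. \<forall>y\<in>C. f x \<le> f y}"

definition argmax_on :: "'a set \<Rightarrow> ('a \<Rightarrow> real) \<Rightarrow> 'a set" where
  "argmax_on C f = {x \<in> C. \<forall>y\<in>C. f y \<le> f x}"

end

theory Submission
  imports Defs
begin

text \<open>
  The iteration of the theorem is Tseng's forward-backward-forward method applied to the
  variational inequality \<open>0 \<in> B w + N\<^sub>C w\<close> on the product \<open>C = C\<^sub>1 \<times> C\<^sub>2\<close> of the two simplices,
  where \<open>B (u, v) = (L v, - L\<^sup>T u)\<close> is the skew operator of the bilinear game.  Its solutions
  are exactly the saddle points of \<open>u\<^sup>T L v\<close>.

  We first prove convergence of the method abstractly, for any closed convex set and any
  bounded skew linear operator in a finite-dimensional inner product space: an energy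
  estimate makes every solution a Fejer point, so the iterates are bounded and the
  residuals \<open>p\<^sub>n - x\<^sub>n\<close> are square-summable; a cluster point then solves the problem, and
  Fejer monotonicity upgrades subsequential to full convergence.
\<close>

lemma scaled_lower_bound:
  fixes a g N \<epsilon> :: real
  assumes "- N \<le> g * a" "0 \<le> N" "\<epsilon> \<le> g" "0 < \<epsilon>"
  shows "- N / \<epsilon> \<le> a"
proof (cases "0 \<le> a")
  case True
  moreover have "0 \<le> N / \<epsilon>" using assms(2,4) by simp
  ultimately show ?thesis by simp
next
  case False
  then have "g * a \<le> \<epsilon> * a" using assms(3) by (simp add: mult_right_mono_neg)
  then have "- N \<le> \<epsilon> * a" using assms(1) by simp
  then show ?thesis using assms(4) by (simp add: field_simps)
qed

text \<open>The step-size condition \<open>\<gamma>\<beta> \<le> 1 - \<epsilon>\<close> keeps the energy-decrease coefficient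
  \<open>1 - \<gamma>\<^sup>2\<beta>\<^sup>2\<close> uniformly above \<open>\<epsilon>\<close>.\<close>

lemma step_size_coefficient:
  fixes \<gamma> \<beta> \<epsilon> :: real
  assumes "0 < \<epsilon>" "\<epsilon> \<le> \<gamma>" "0 \<le> \<beta>" "\<gamma> * \<beta> \<le> 1 - \<epsilon>"
  shows "\<epsilon> \<le> 1 - \<gamma>^2 * \<beta>^2"
proof -
  have "0 \<le> \<gamma> * \<beta>" using assms by simp
  then have "(\<gamma> * \<beta>)^2 \<le> (1 - \<epsilon>)^2" using assms(4) by (simp add: power_mono)
  moreover have "\<epsilon> * \<epsilon> \<le> \<epsilon>"
    using \<open>0 \<le> \<gamma> * \<beta>\<close> assms(1,4) by (simp add: mult_left_le)
  ultimately show ?thesis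
    by (simp add: power_mult_distrib power2_eq_square algebra_simps)
qed

lemma descent_residual_tendsto_zero:
  fixes a e :: "nat \<Rightarrow> real"
  assumes descent: "\<And>n. a (Suc n) \<le> a n - \<epsilon> * e n"
    and a: "\<And>n. 0 \<le> a n" and e: "\<And>n. 0 \<le> e n" and \<epsilon>: "0 < \<epsilon>"
  shows "e \<longlonglongrightarrow> 0"
proof -
  have telescope: "\<epsilon> * (\<Sum>k<n. e k) \<le> a 0 - a n" for n
  proof (induction n)
    case (Suc n)
    then show ?case using descent[of n] by (simp add: algebra_simps)
  qed simp
  have "summable e"
  proof (rule summableI_nonneg_bounded)
    show "(\<Sum>k<n. e k) \<le> a 0 / \<epsilon>" for n
      using telescope[of n] a[of n] \<epsilon> by (simp add: pos_le_divide_eq mult.commute)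
  qed (use e in auto)
  then show ?thesis by (rule summable_LIMSEQ_zero)
qed

lemma fejer_monotone_limit:
  fixes X :: "nat \<Rightarrow> 'a::metric_space"
  assumes dec: "decseq (\<lambda>n. dist (X n) l)" and r: "strict_mono r" and sub: "(X \<circ> r) \<longlonglongrightarrow> l"
  shows "X \<longlonglongrightarrow> l"
proof -
  obtain d where d: "(\<lambda>n. dist (X n) l) \<longlonglongrightarrow> d"
    using decseq_convergent[OF dec, of 0] by auto
  have "(\<lambda>n. dist (X (r n)) l) \<longlonglongrightarrow> d"
    using LIMSEQ_subseq_LIMSEQ[OF d r] by (simp add: o_def)
  moreover have "(\<lambda>n. dist (X (r n)) l) \<longlonglongrightarrow> dist l l"
    using sub by (intro tendsto_intros) (simp add: o_def)
  ultimately have "d = 0" by (simp add: LIMSEQ_unique)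
  then show ?thesis using d by (simp add: tendsto_dist_iff[of X])
qed

text \<open>Projecting onto a product of closed convex sets is done componentwise; this identifies
  the coupled iteration of the theorem with one iteration on the product space.\<close>

lemma closest_point_Times:
  fixes a :: "'a::{real_inner,heine_borel}" and b :: "'b::{real_inner,heine_borel}"
  assumes A: "convex A" "closed A" "A \<noteq> {}" and B: "convex B" "closed B" "B \<noteq> {}"
  shows "closest_point (A \<times> B) (a, b) = (closest_point A a, closest_point B b)"
proof (rule closest_point_unique[symmetric])
  show "convex (A \<times> B)" "closed (A \<times> B)" using A B by (simp_all add: convex_Times closed_Times)
  show "(closest_point A a, closest_point B b) \<in> A \<times> B"
    using A B by (simp add: closest_point_in_set)
  show "\<forall>z\<in>A \<times> B. dist (a, b) (closest_point A a, closest_point B b) \<le> dist (a, b) z"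
  proof safe
    fix x y assume "x \<in> A" "y \<in> B"
    then have "dist a (closest_point A a) \<le> dist a x" "dist b (closest_point B b) \<le> dist b y"
      using A B by (simp_all add: closest_point_le)
    then show "dist (a, b) (closest_point A a, closest_point B b) \<le> dist (a, b) (x, y)"
      unfolding dist_Pair_Pair by (intro real_sqrt_le_mono add_mono power_mono) simp_all
  qed
qed

section \<open>Tseng's method for skew linear operators\<close>

text \<open>Solutions of the variational inequality \<open>0 \<in> B z + N\<^sub>C z\<close>, written out:
  \<open>z \<in> C\<close> and \<open>\<langle>B z, c - z\<rangle> \<ge> 0\<close> for all \<open>c \<in> C\<close>.\<close>

definition vi_solutions :: "'a::real_inner set \<Rightarrow> ('a \<Rightarrow> 'a) \<Rightarrow> 'a set" where
  "vi_solutions C B = {z \<in> C. \<forall>c\<in>C. 0 \<le> inner (B z) (c - z)}"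

text \<open>One step of Tseng's forward-backward-forward method: a forward step, a projection
  \<open>p = P\<^sub>C (x - \<gamma> B x)\<close>, and the correcting forward step \<open>p - \<gamma> B p + \<gamma> B x\<close>.\<close>

definition fbf_step :: "'a::{real_inner,heine_borel} set \<Rightarrow> ('a \<Rightarrow> 'a) \<Rightarrow> real \<Rightarrow> 'a \<Rightarrow> 'a" where
  "fbf_step C B \<gamma> x = (let p = closest_point C (x - \<gamma> *\<^sub>R B x) in p - \<gamma> *\<^sub>R B (p - x))"

lemma fbf_energy_estimate:
  fixes B :: "'a::real_inner \<Rightarrow> 'a"
  assumes lin: "linear B" and skew: "\<And>w. inner (B w) w = 0"
    and bnd: "\<And>w. norm (B w) \<le> \<beta> * norm w"
    and proj: "inner (x - \<gamma> *\<^sub>R B x - p) (z - p) \<le> 0"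
    and sol: "0 \<le> inner (B z) (p - z)" and \<gamma>: "0 \<le> \<gamma>"
  shows "norm (p - \<gamma> *\<^sub>R B (p - x) - z)^2
           \<le> norm (x - z)^2 - (1 - \<gamma>^2 * \<beta>^2) * norm (p - x)^2"
proof -
  define w where "w = p - x"
  define e where "e = p - z"
  have expand_new: "norm (p - \<gamma> *\<^sub>R B w - z)^2 = norm e^2 - 2*\<gamma>*inner (B w) e + \<gamma>^2 * norm (B w)^2"
  proof -
    have shift: "p - \<gamma> *\<^sub>R B w - z = e - \<gamma> *\<^sub>R B w" by (simp add: e_def)
    have "norm (p - \<gamma> *\<^sub>R B w - z)^2 = inner (e - \<gamma> *\<^sub>R B w) (e - \<gamma> *\<^sub>R B w)"
      unfolding shift by (simp add: power2_norm_eq_inner)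
    also have "\<dots> = inner e e - 2*\<gamma>*inner (B w) e + \<gamma>^2 * inner (B w) (B w)"
      by (simp add: inner_diff_left inner_diff_right inner_commute algebra_simps power2_eq_square)
    finally show ?thesis by (simp add: power2_norm_eq_inner)
  qed
  have expand_old: "norm e^2 = norm (x - z)^2 + 2 * inner w e - norm w^2"
    unfolding w_def e_def by (simp add: power2_norm_eq_inner inner_simps algebra_simps inner_commute)
  have projection: "inner w e + \<gamma> * inner (B x) e \<le> 0"
    using proj unfolding w_def e_def by (simp add: inner_simps algebra_simps)
  have monotone: "0 \<le> inner (B p) e"
  proof -
    have "inner (B p) e = inner (B e) e + inner (B z) e"
      unfolding e_def using lin by (simp add: linear_diff inner_simps)
    then show ?thesis using skew[of e] sol e_def by simp
  qed
  then have monotone_scaled: "0 \<le> \<gamma> * inner (B p) e" using \<gamma> by simp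
  have "norm (B w)^2 \<le> \<beta>^2 * norm w^2"
    using bnd[of w] by (metis norm_ge_zero power_mono power_mult_distrib)
  then have lipschitz: "\<gamma>^2 * norm (B w)^2 \<le> \<gamma>^2 * (\<beta>^2 * norm w^2)"
    by (simp add: mult_left_mono)
  have "inner (B w) e = inner (B p) e - inner (B x) e"
    unfolding w_def using lin by (simp add: linear_diff inner_simps)
  with expand_new expand_old projection monotone_scaled lipschitz show ?thesis
    unfolding w_def[symmetric] by (simp add: algebra_simps)
qed

lemma fbf_step_fejer:
  fixes B :: "'a::{real_inner,heine_borel} \<Rightarrow> 'a"
  assumes C: "convex C" "closed C" and lin: "linear B" and skew: "\<And>w. inner (B w) w = 0"
    and bnd: "\<And>w. norm (B w) \<le> \<beta> * norm w"
    and z: "z \<in> vi_solutions C B" and \<gamma>: "0 \<le> \<gamma>"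
  shows "norm (fbf_step C B \<gamma> x - z)^2
           \<le> norm (x - z)^2 - (1 - \<gamma>^2 * \<beta>^2) * norm (closest_point C (x - \<gamma> *\<^sub>R B x) - x)^2"
proof -
  define p where "p = closest_point C (x - \<gamma> *\<^sub>R B x)"
  have zC: "z \<in> C" and "C \<noteq> {}" using z by (auto simp: vi_solutions_def)
  then have "p \<in> C" unfolding p_def using C by (simp add: closest_point_in_set)
  then have sol: "0 \<le> inner (B z) (p - z)" using z by (simp add: vi_solutions_def)
  have proj: "inner (x - \<gamma> *\<^sub>R B x - p) (z - p) \<le> 0"
    unfolding p_def using C zC by (rule closest_point_dot)
  show ?thesis
    using fbf_energy_estimate[OF lin skew bnd proj sol \<gamma>]
    by (simp add: fbf_step_def p_def Let_def)
qed

text \<open>If the iterates converge along a subsequence and the projection residuals vanish, the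
  limit solves the variational inequality (pass to the limit in the projection inequality).\<close>

lemma fbf_cluster_point_solves_vi:
  fixes B :: "'a::{real_inner,heine_borel} \<Rightarrow> 'a"
  assumes C: "convex C" "closed C" "C \<noteq> {}" and B: "bounded_linear B"
    and \<epsilon>: "0 < \<epsilon>" and g: "\<And>k. \<epsilon> \<le> g k"
    and U: "U \<longlonglongrightarrow> l"
    and residual: "(\<lambda>k. closest_point C (U k - g k *\<^sub>R B (U k)) - U k) \<longlonglongrightarrow> 0"
  shows "l \<in> vi_solutions C B"
proof -
  define Q where "Q k = closest_point C (U k - g k *\<^sub>R B (U k))" for k
  have QC: "Q k \<in> C" for k unfolding Q_def using C by (simp add: closest_point_in_set)
  have Q: "Q \<longlonglongrightarrow> l" using tendsto_add[OF residual U] by (simp add: Q_def[abs_def])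
  have "l \<in> C" using closed_sequentially[OF C(2)] QC Q by blast
  moreover have "0 \<le> inner (B l) (c - l)" if c: "c \<in> C" for c
  proof -
    let ?N = "\<lambda>k. norm (U k - Q k) * norm (c - Q k)"
    \<comment> \<open>The projection inequality, divided by the step size, bounds the VI residual from below.\<close>
    have lower: "- ?N k / \<epsilon> \<le> inner (B (U k)) (c - Q k)" for k
    proof -
      have "inner (U k - g k *\<^sub>R B (U k) - Q k) (c - Q k) \<le> 0"
        unfolding Q_def using C(1,2) c by (rule closest_point_dot)
      moreover have "- ?N k \<le> inner (U k - Q k) (c - Q k)"
        using Cauchy_Schwarz_ineq2[of "U k - Q k" "c - Q k"] by linarith
      ultimately have "- ?N k \<le> g k * inner (B (U k)) (c - Q k)"
        by (simp add: inner_diff_left)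
      then show ?thesis using g[of k] \<epsilon> by (intro scaled_lower_bound) simp_all
    qed
    have "(\<lambda>k. U k - Q k) \<longlonglongrightarrow> 0"
      using tendsto_minus[OF residual] by (simp add: Q_def)
    then have "?N \<longlonglongrightarrow> norm (0::'a) * norm (c - l)"
      by (intro tendsto_intros Q)
    then have lim_lower: "(\<lambda>k. - ?N k / \<epsilon>) \<longlonglongrightarrow> - (norm (0::'a) * norm (c - l)) / \<epsilon>"
      using \<epsilon> by (intro tendsto_divide tendsto_minus tendsto_const) simp_all
    have lim_vi: "(\<lambda>k. inner (B (U k)) (c - Q k)) \<longlonglongrightarrow> inner (B l) (c - l)"
      by (intro tendsto_intros bounded_linear.tendsto[OF B U] Q)
    have "- (norm (0::'a) * norm (c - l)) / \<epsilon> \<le> inner (B l) (c - l)"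
      by (rule LIMSEQ_le[OF lim_lower lim_vi]) (use lower in blast)
    then show ?thesis by simp
  qed
  ultimately show ?thesis by (simp add: vi_solutions_def)
qed

theorem fbf_convergence:
  fixes B :: "'a::{real_inner,heine_borel} \<Rightarrow> 'a" and X :: "nat \<Rightarrow> 'a"
  assumes C: "convex C" "closed C"
    and B: "bounded_linear B" "\<And>w. inner (B w) w = 0" "\<And>w. norm (B w) \<le> \<beta> * norm w" "0 \<le> \<beta>"
    and sol: "z \<in> vi_solutions C B"
    and \<epsilon>: "0 < \<epsilon>" and \<gamma>: "\<And>n. \<epsilon> \<le> \<gamma> n" "\<And>n. \<gamma> n * \<beta> \<le> 1 - \<epsilon>"
    and X: "\<And>n. X (Suc n) = fbf_step C B (\<gamma> n) (X n)"
  shows "\<exists>l \<in> vi_solutions C B. X \<longlonglongrightarrow> l"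
proof -
  define R where "R n = closest_point C (X n - \<gamma> n *\<^sub>R B (X n)) - X n" for n
  have "C \<noteq> {}" using sol by (auto simp: vi_solutions_def)
  have fejer: "norm (X (Suc n) - y)^2 \<le> norm (X n - y)^2 - \<epsilon> * norm (R n)^2"
    if "y \<in> vi_solutions C B" for y n
  proof -
    have "\<epsilon> * norm (R n)^2 \<le> (1 - (\<gamma> n)^2 * \<beta>^2) * norm (R n)^2"
      using step_size_coefficient[OF \<epsilon> \<gamma>(1) B(4) \<gamma>(2)] by (intro mult_right_mono) auto
    moreover have "0 \<le> \<gamma> n" using \<epsilon> \<gamma>(1)[of n] by linarith
    then have "norm (X (Suc n) - y)^2 \<le> norm (X n - y)^2 - (1 - (\<gamma> n)^2 * \<beta>^2) * norm (R n)^2"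
      unfolding X R_def by (rule fbf_step_fejer[OF C bounded_linear.linear[OF B(1)] B(2,3) that])
    ultimately show ?thesis by linarith
  qed
  have dec: "decseq (\<lambda>n. dist (X n) y)" if "y \<in> vi_solutions C B" for y
  proof (rule decseq_SucI)
    fix n
    have "0 \<le> \<epsilon> * norm (R n)^2" using \<epsilon> by simp
    then have "norm (X (Suc n) - y)^2 \<le> norm (X n - y)^2" using fejer[OF that, of n] by linarith
    then show "dist (X (Suc n)) y \<le> dist (X n) y"
      unfolding dist_norm by (rule power2_le_imp_le) simp
  qed
  have "(\<lambda>n. norm (R n)^2) \<longlonglongrightarrow> 0"
    using fejer[OF sol] \<epsilon>
    by (intro descent_residual_tendsto_zero[where a = "\<lambda>n. norm (X n - z)^2"]) auto
  then have "(\<lambda>n. sqrt (norm (R n)^2)) \<longlonglongrightarrow> sqrt 0" by (rule tendsto_real_sqrt)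
  then have R: "R \<longlonglongrightarrow> 0" by (simp add: tendsto_norm_zero_iff)
  have "bounded (range X)"
  proof (rule bounded_subset[OF bounded_cball])
    show "range X \<subseteq> cball z (dist (X 0) z)"
      using dec[OF sol] by (auto simp: decseq_def dist_commute)
  qed
  then obtain l r where r: "strict_mono r" and Xr: "(X \<circ> r) \<longlonglongrightarrow> l"
    using bounded_imp_convergent_subsequence by blast
  have "l \<in> vi_solutions C B"
  proof (rule fbf_cluster_point_solves_vi[OF C \<open>C \<noteq> {}\<close> B(1) \<epsilon>])
    show "(X \<circ> r) \<longlonglongrightarrow> l" by (rule Xr)
    show "\<epsilon> \<le> (\<gamma> \<circ> r) k" for k using \<gamma>(1) by simp
    show "(\<lambda>k. closest_point C ((X \<circ> r) k - (\<gamma> \<circ> r) k *\<^sub>R B ((X \<circ> r) k)) - (X \<circ> r) k) \<longlonglongrightarrow> 0"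
      using LIMSEQ_subseq_LIMSEQ[OF R r] by (simp add: R_def o_def)
  qed
  then show ?thesis using fejer_monotone_limit[OF dec r Xr] by blast
qed

section \<open>Matrix games on probability simplices\<close>

lemma closed_prob_simplex: "closed (prob_simplex :: (real ^ 'n::finite) set)"
proof -
  have "prob_simplex = (\<Inter>j. {v::real^'n. 0 \<le> v $ j} \<inter> {v. v $ j \<le> 1}) \<inter> {v. (\<Sum>j\<in>UNIV. v $ j) = 1}"
    unfolding prob_simplex_def by auto
  moreover have "closed \<dots>"
    by (intro closed_Int closed_INT ballI closed_Collect_le closed_Collect_eq continuous_intros)
  ultimately show ?thesis by simp
qed

lemma convex_prob_simplex: "convex (prob_simplex :: (real ^ 'n::finite) set)"
proof (rule convexI)
  fix x y :: "real^'n" and u v :: real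
  assume "x \<in> prob_simplex" "y \<in> prob_simplex" and uv: "0 \<le> u" "0 \<le> v" "u + v = 1"
  then have x: "\<And>j. 0 \<le> x $ j \<and> x $ j \<le> 1" "(\<Sum>j\<in>UNIV. x $ j) = 1"
    and y: "\<And>j. 0 \<le> y $ j \<and> y $ j \<le> 1" "(\<Sum>j\<in>UNIV. y $ j) = 1"
    by (auto simp: prob_simplex_def)
  have "0 \<le> u * x $ j + v * y $ j \<and> u * x $ j + v * y $ j \<le> 1" for j
  proof -
    have "u * x $ j \<le> u" "v * y $ j \<le> v" using x y uv by (simp_all add: mult_left_le)
    then show ?thesis using uv x y by simp
  qed
  moreover have "(\<Sum>j\<in>UNIV. u * x $ j + v * y $ j) = 1"
    using x y uv by (simp add: sum.distrib sum_distrib_left[symmetric])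
  ultimately show "u *\<^sub>R x + v *\<^sub>R y \<in> prob_simplex" by (simp add: prob_simplex_def)
qed

lemma norm_transpose_le:
  fixes L :: "real^'n::finite^'m::finite"
  shows "norm (transpose L *v a) \<le> onorm ((*v) L) * norm a"
proof -
  define t where "t = transpose L *v a"
  have "norm t ^2 = inner (L *v t) a"
    by (simp add: t_def power2_norm_eq_inner dot_lmul_matrix[symmetric] inner_commute)
  also have "\<dots> \<le> norm (L *v t) * norm a" by (rule Cauchy_Schwarz_ineq2[THEN abs_le_D1])
  also have "\<dots> \<le> onorm ((*v) L) * norm t * norm a"
    by (intro mult_right_mono onorm) auto
  finally have "norm t * norm t \<le> (onorm ((*v) L) * norm a) * norm t"
    by (simp add: power2_eq_square algebra_simps)
  then show ?thesis unfolding t_def[symmetric]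
    by (cases "t = 0") (auto simp: onorm_pos_le)
qed

definition game_op :: "real^'m::finite^'n::finite \<Rightarrow> (real^'n) \<times> (real^'m) \<Rightarrow> (real^'n) \<times> (real^'m)"
  where "game_op L w = (L *v snd w, - (transpose L *v fst w))"

lemma game_op_bounded_linear: "bounded_linear (game_op L)"
  unfolding game_op_def[abs_def]
  by (intro bounded_linear_Pair bounded_linear_minus
      bounded_linear_compose[OF matrix_vector_mul_bounded_linear] bounded_linear_fst bounded_linear_snd)

lemma game_op_skew: "inner (game_op L w) w = 0"
  by (cases w) (simp add: game_op_def dot_lmul_matrix[symmetric] inner_commute)

lemma game_op_norm_le: "norm (game_op L w) \<le> onorm ((*v) L) * norm w"
proof (cases w)
  case (Pair a b)
  define \<beta> where "\<beta> = onorm ((*v) L)"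
  have "norm (L *v b) \<le> \<beta> * norm b" unfolding \<beta>_def by (rule onorm) simp
  then have "norm (L *v b)^2 \<le> \<beta>^2 * norm b^2"
    by (metis norm_ge_zero power_mono power_mult_distrib)
  moreover have "norm (transpose L *v a) \<le> \<beta> * norm a"
    unfolding \<beta>_def by (rule norm_transpose_le)
  then have "norm (transpose L *v a)^2 \<le> \<beta>^2 * norm a^2"
    by (metis norm_ge_zero power_mono power_mult_distrib)
  ultimately have "norm (game_op L w)^2 \<le> (\<beta> * norm w)^2"
    by (simp add: Pair game_op_def norm_Pair power_mult_distrib algebra_simps)
  moreover have "0 \<le> \<beta> * norm w" unfolding \<beta>_def by (simp add: onorm_pos_le)
  ultimately show ?thesis unfolding \<beta>_def by (rule power2_le_imp_le)
qed

lemma saddle_point_in_vi: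
  fixes L :: "real^'m::finite^'n::finite"
  assumes "z1 \<in> C1" "z2 \<in> C2"
    and "- (L *v z2) \<in> normal_cone C1 z1" "transpose L *v z1 \<in> normal_cone C2 z2"
  shows "(z1, z2) \<in> vi_solutions (C1 \<times> C2) (game_op L)"
proof -
  have "0 \<le> inner (game_op L (z1, z2)) ((x, y) - (z1, z2))" if "x \<in> C1" "y \<in> C2" for x y
  proof -
    have "inner (x - z1) (- (L *v z2)) \<le> 0" "inner (y - z2) (transpose L *v z1) \<le> 0"
      using assms that by (auto simp: normal_cone_def)
    then show ?thesis by (simp add: game_op_def inner_commute)
  qed
  then show ?thesis using assms(1,2) by (auto simp: vi_solutions_def)
qed

lemma vi_saddle_point:
  fixes L :: "real^'m::finite^'n::finite"
  assumes sol: "(a, b) \<in> vi_solutions (C1 \<times> C2) (game_op L)"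
  shows "a \<in> argmin_on C1 (\<lambda>x. x \<bullet> (L *v b))" "b \<in> argmax_on C2 (\<lambda>x. a \<bullet> (L *v x))"
proof -
  have ab: "a \<in> C1" "b \<in> C2" using sol by (auto simp: vi_solutions_def)
  have vi: "0 \<le> inner (game_op L (a, b)) ((x, y) - (a, b))" if "x \<in> C1" "y \<in> C2" for x y
    using sol that by (auto simp: vi_solutions_def)
  show "a \<in> argmin_on C1 (\<lambda>x. x \<bullet> (L *v b))"
    using ab vi[of _ b] by (auto simp: argmin_on_def game_op_def inner_commute inner_diff_right)
  show "b \<in> argmax_on C2 (\<lambda>x. a \<bullet> (L *v x))"
    using ab vi[of a] by (auto simp: argmax_on_def game_op_def inner_diff_right
        dot_lmul_matrix[symmetric] inner_commute)
qed

theorem mainTheorem6: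
  fixes L :: "real ^ 'n2::finite ^ 'n1::finite"
    and \<epsilon> :: real and \<gamma> :: "nat \<Rightarrow> real"
    and x1 y1 p1 q1 :: "nat \<Rightarrow> real ^ 'n1"
    and x2 y2 p2 q2 :: "nat \<Rightarrow> real ^ 'n2"
  assumes L_nz: "L \<noteq> 0"
    and sol: "\<exists>z1 z2. z1 \<in> (prob_simplex :: (real^'n1) set) \<and> z2 \<in> (prob_simplex :: (real^'n2) set)
               \<and> - (L *v z2) \<in> normal_cone prob_simplex z1
               \<and> transpose L *v z1 \<in> normal_cone prob_simplex z2"
    and eps: "0 < \<epsilon>" "\<epsilon> < 1 / (onorm ((*v) L) + 1)"
    and gam: "\<And>n. \<epsilon> \<le> \<gamma> n \<and> \<gamma> n \<le> (1 - \<epsilon>) / onorm ((*v) L)"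
    and y1: "\<And>n. y1 n = x1 n - \<gamma> n *\<^sub>R (L *v x2 n)"
    and y2: "\<And>n. y2 n = x2 n + \<gamma> n *\<^sub>R (transpose L *v x1 n)"
    and p1: "\<And>n. p1 n = closest_point prob_simplex (y1 n)"
    and p2: "\<And>n. p2 n = closest_point prob_simplex (y2 n)"
    and q1: "\<And>n. q1 n = p1 n - \<gamma> n *\<^sub>R (L *v p2 n)"
    and q2: "\<And>n. q2 n = p2 n + \<gamma> n *\<^sub>R (transpose L *v p1 n)"
    and x1s: "\<And>n. x1 (Suc n) = x1 n - y1 n + q1 n"
    and x2s: "\<And>n. x2 (Suc n) = x2 n - y2 n + q2 n"
  shows "\<exists>xb1 xb2. x1 \<longlonglongrightarrow> xb1 \<and> x2 \<longlonglongrightarrow> xb2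
           \<and> xb1 \<in> argmin_on prob_simplex (\<lambda>x. x \<bullet> (L *v xb2))
           \<and> xb2 \<in> argmax_on prob_simplex (\<lambda>x. xb1 \<bullet> (L *v x))"
proof -
  define \<beta> where "\<beta> = onorm ((*v) L)"
  obtain z1 z2 where z: "z1 \<in> prob_simplex" "z2 \<in> prob_simplex"
    "- (L *v z2) \<in> normal_cone prob_simplex z1" "transpose L *v z1 \<in> normal_cone prob_simplex z2"
    using sol by blast
  have nonempty: "(prob_simplex :: (real^'n1) set) \<noteq> {}" "(prob_simplex :: (real^'n2) set) \<noteq> {}"
    using z by auto
  \<comment> \<open>A zero operator norm would make the step-size interval empty.\<close>
  have "0 < \<beta>"
    using gam[of 0] eps(1) onorm_pos_le[of "(*v) L"] unfolding \<beta>_def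
    by (cases "\<beta> = 0") (auto simp: \<beta>_def)
  then have step: "\<gamma> n * \<beta> \<le> 1 - \<epsilon>" for n
    using gam[of n] by (simp add: \<beta>_def[symmetric] pos_le_divide_eq)
  define X where "X n = (x1 n, x2 n)" for n
  have "X (Suc n) = fbf_step (prob_simplex \<times> prob_simplex) (game_op L) (\<gamma> n) (X n)" for n
    using x1s[of n] x2s[of n]
    by (simp add: X_def fbf_step_def game_op_def closest_point_Times[OF convex_prob_simplex closed_prob_simplex nonempty(1)
          convex_prob_simplex closed_prob_simplex nonempty(2)]
        y1 y2 p1 p2 q1 q2 matrix_vector_mult_diff_distrib algebra_simps)
  then obtain l where l: "l \<in> vi_solutions (prob_simplex \<times> prob_simplex) (game_op L)" "X \<longlonglongrightarrow> l"
    using fbf_convergence[OF convex_Times[OF convex_prob_simplex convex_prob_simplex]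
        closed_Times[OF closed_prob_simplex closed_prob_simplex] game_op_bounded_linear game_op_skew game_op_norm_le onorm_pos_le saddle_point_in_vi[OF z] eps(1)]
      step gam unfolding \<beta>_def by blast
  obtain xb1 xb2 where "l = (xb1, xb2)" by (cases l)
  with l have "x1 \<longlonglongrightarrow> xb1" "x2 \<longlonglongrightarrow> xb2"
    "(xb1, xb2) \<in> vi_solutions (prob_simplex \<times> prob_simplex) (game_op L)"
    using tendsto_fst[OF l(2)] tendsto_snd[OF l(2)] unfolding X_def by auto
  then show ?thesis using vi_saddle_point by blast
qed

end
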